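(* Let $m>n$ be coprime positive integers, $k\in\mathbb Z$, $\alpha=\epsilon_i-\delta_j$ and $\beta=\nu^{-k}(\alpha)$. If $\lambda\in X_{\pm\alpha}$, then $x(\lambda,k)\in\Pi_{\pm\beta}$ and $x(t_{\pm\alpha}(\lambda),k)=\tau_{\pm\beta}(x(\lambda,k))$.
   Context: $X$ is the set of partitions $\lambda=(\lambda_1\ge\dots\ge\lambda_n\ge0)$ with $\lambda_1\le m$, drawn in an $n\times m$ rectangle with rows $\epsilon_1,\dots,\epsilon_n$ top to bottom and columns $\delta_1,\dots,\delta_m$; the diagram consists of boxes $\epsilon_p-\delta_q$ with $q\le\lambda_{n+1-p}$; $\lambda'_q=\#\{p:\lambda_p\ge q\}$. $X_\alpha$ (resp. $X_{-\alpha}$): diagrams for which box $\alpha$ is an outer (resp. inner) corner; $t_\alpha$ adds and $t_{-\alpha}$ removes it. Elements of $\mathbb Z^{n|m}$ are $(a_1,\dots,a_n|b_1,\dots,b_m)=\sum a_p\epsilon_p-\sum b_q\delta_q$. $x(\lambda)$ has $a_p=m(n-p)+n\lambda_{n+1-p}$, $b_q=n(q-1)+m\lambda'_q$, and $x(\lambda,k)=\nu^{-k}x(\lambda)+k\mathbf m$ with $\mathbf m=(m,\dots,m|m,\dots,m)$, where $\nu$ is linear with $\nu\epsilon_p=\epsilon_{p+1}$ (indices mod $n$ in $\{1,\dots,n\}$), $\nu\delta_q=\delta_q$. For $\gamma=\epsilon_p-\delta_q$: $\Pi_\gamma=\{a_p=b_q\}$, $\Pi_{-\gamma}=\{a_p-b_q=n-m\}$,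 $\tau_\gamma$ adds $n$ to $a_p$ and $m$ to $b_q$, $\tau_{-\gamma}=\tau_\gamma^{-1}$. *)

theory Defs
  imports Main
begin

text \<open>Partitions lambda = (lambda_1 >= ... >= lambda_n >= 0) with lambda_1 <= m,
  represented as functions nat => nat, with lambda p meaningful for p in {1..n}
  and lambda p = 0 outside {1..n} (canonical representation).\<close>

definition partsX :: "nat \<Rightarrow> nat \<Rightarrow> (nat \<Rightarrow> nat) set" where
  "partsX n m = {lam. (\<forall>p. (p < 1 \<or> p > n) \<longrightarrow> lam p = 0)
                  \<and> (\<forall>p q. 1 \<le> p \<longrightarrow> p \<le> q \<longrightarrow> q \<le> n \<longrightarrow> lam q \<le> lam p)
                  \<and> (\<forall>p. lam p \<le> m)}"

text \<open>Diagram: the set of boxes eps_p - delta_q, encoded as pairs (p,q),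
  with 1 <= p <= n, 1 <= q <= lambda_(n+1-p).\<close>

definition diagram :: "nat \<Rightarrow> (nat \<Rightarrow> nat) \<Rightarrow> (nat \<times> nat) set" where
  "diagram n lam = {(p, q). 1 \<le> p \<and> p \<le> n \<and> 1 \<le> q \<and> q \<le> lam (n + 1 - p)}"

definition conj_part :: "nat \<Rightarrow> (nat \<Rightarrow> nat) \<Rightarrow> nat \<Rightarrow> nat" where
  "conj_part n lam q = card {p \<in> {1..n}. q \<le> lam p}"

definition Xplus :: "nat \<Rightarrow> nat \<Rightarrow> nat \<times> nat \<Rightarrow> (nat \<Rightarrow> nat) set" where
  "Xplus n m \<alpha> = {lam \<in> partsX n m. \<alpha> \<notin> diagram n lam \<and>
       (\<exists>mu \<in> partsX n m. diagram n mu = diagram n lam \<union> {\<alpha>})}"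

definition Xminus :: "nat \<Rightarrow> nat \<Rightarrow> nat \<times> nat \<Rightarrow> (nat \<Rightarrow> nat) set" where
  "Xminus n m \<alpha> = {lam \<in> partsX n m. \<alpha> \<in> diagram n lam \<and>
       (\<exists>mu \<in> partsX n m. diagram n mu = diagram n lam - {\<alpha>})}"

definition tplus :: "nat \<Rightarrow> nat \<Rightarrow> nat \<times> nat \<Rightarrow> (nat \<Rightarrow> nat) \<Rightarrow> (nat \<Rightarrow> nat)" where
  "tplus n m \<alpha> lam = (THE mu. mu \<in> partsX n m \<and> diagram n mu = diagram n lam \<union> {\<alpha>})"

definition tminus :: "nat \<Rightarrow> nat \<Rightarrow> nat \<times> nat \<Rightarrow> (nat \<Rightarrow> nat) \<Rightarrow> (nat \<Rightarrow> nat)" where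
  "tminus n m \<alpha> lam = (THE mu. mu \<in> partsX n m \<and> diagram n mu = diagram n lam - {\<alpha>})"

text \<open>Elements of Z^{n|m}: pairs (a, b) of coefficient functions, a indexed by {1..n},
  b by {1..m}, zero outside these ranges; (a|b) = sum a_p eps_p - sum b_q delta_q.\<close>

type_synonym zvec = "(nat \<Rightarrow> int) \<times> (nat \<Rightarrow> int)"

definition xvec :: "nat \<Rightarrow> nat \<Rightarrow> (nat \<Rightarrow> nat) \<Rightarrow> zvec" where
  "xvec n m lam =
     ((\<lambda>p. if 1 \<le> p \<and> p \<le> n then int m * (int n - int p) + int n * int (lam (n + 1 - p)) else 0),
      (\<lambda>q. if 1 \<le> q \<and> q \<le> m then int n * (int q - 1) + int m * int (conj_part n lam q) else 0))"

text \<open>Index shift: nu^k(eps_p) = eps_(nu_idx n k p), indices mod n in {1..n}.\<close>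

definition nu_idx :: "nat \<Rightarrow> int \<Rightarrow> nat \<Rightarrow> nat" where
  "nu_idx n k p = nat ((int p - 1 + k) mod int n) + 1"

text \<open>Linear action of nu^k on Z^{n|m}: nu^k (sum a_p eps_p) = sum a_p eps_(p+k),
  so the new coefficient at r is a_(r-k); delta's are fixed.\<close>

definition nu_vec :: "nat \<Rightarrow> nat \<Rightarrow> int \<Rightarrow> zvec \<Rightarrow> zvec" where
  "nu_vec n m k x =
     ((\<lambda>r. if 1 \<le> r \<and> r \<le> n then fst x (nu_idx n (- k) r) else 0), snd x)"

definition add_vec :: "nat \<Rightarrow> nat \<Rightarrow> zvec \<Rightarrow> zvec \<Rightarrow> zvec" where
  "add_vec n m x y =
     ((\<lambda>p. if 1 \<le> p \<and> p \<le> n then fst x p + fst y p else 0),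
      (\<lambda>q. if 1 \<le> q \<and> q \<le> m then snd x q + snd y q else 0))"

definition mvec :: "nat \<Rightarrow> nat \<Rightarrow> int \<Rightarrow> zvec" where
  "mvec n m k = ((\<lambda>p. if 1 \<le> p \<and> p \<le> n then k * int m else 0),
                 (\<lambda>q. if 1 \<le> q \<and> q \<le> m then k * int m else 0))"

definition xk :: "nat \<Rightarrow> nat \<Rightarrow> (nat \<Rightarrow> nat) \<Rightarrow> int \<Rightarrow> zvec" where
  "xk n m lam k = add_vec n m (nu_vec n m (- k) (xvec n m lam)) (mvec n m k)"

text \<open>Hyperplanes and translations for gamma = eps_p - delta_q, encoded as (p,q).\<close>

definition Piplus :: "nat \<times> nat \<Rightarrow> zvec set" where
  "Piplus \<gamma> = {x. fst x (fst \<gamma>) = snd x (snd \<gamma>)}"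

definition Piminus :: "nat \<Rightarrow> nat \<Rightarrow> nat \<times> nat \<Rightarrow> zvec set" where
  "Piminus n m \<gamma> = {x. fst x (fst \<gamma>) - snd x (snd \<gamma>) = int n - int m}"

definition tauplus :: "nat \<Rightarrow> nat \<Rightarrow> nat \<times> nat \<Rightarrow> zvec \<Rightarrow> zvec" where
  "tauplus n m \<gamma> x = ((fst x)(fst \<gamma> := fst x (fst \<gamma>) + int n),
                       (snd x)(snd \<gamma> := snd x (snd \<gamma>) + int m))"

definition tauminus :: "nat \<Rightarrow> nat \<Rightarrow> nat \<times> nat \<Rightarrow> zvec \<Rightarrow> zvec" where
  "tauminus n m \<gamma> x = ((fst x)(fst \<gamma> := fst x (fst \<gamma>) - int n),
                        (snd x)(snd \<gamma> := snd x (snd \<gamma>) - int m))"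

end

theory Submission
  imports Defs
begin

(* Adding the box eps_i - delta_j to lambda raises the part lambda_(n+1-i) from j - 1 to j and
   the conjugate part lambda'_j from n - i to n + 1 - i; nothing else changes.  Hence x(lambda)
   changes only in the coordinates a_i (by n) and b_j (by m), and before the step
   a_i - b_j = m (n - i) + n (j - 1) - n (j - 1) - m (n - i) = 0.  Twisting by nu^(-k) only
   relabels a_i as a_(nu^(-k) i) and adds the same constant k m to every coordinate.  Removing
   a box is the inverse step, so the second claim follows from the first applied to
   t_(-alpha)(lambda). *)

lemma nu_idx_bounds:
  assumes "0 < n"
  shows "1 \<le> nu_idx n k p" and "nu_idx n k p \<le> n"
proof -
  have "0 \<le> (int p - 1 + k) mod int n" and "(int p - 1 + k) mod int n < int n"
    using assms by simp_all
  then show "1 \<le> nu_idx n k p" and "nu_idx n k p \<le> n"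
    by (simp_all add: nu_idx_def Suc_le_eq nat_less_iff)
qed

lemma nu_idx_inverse:
  assumes "0 < n" and "1 \<le> i" and "i \<le> n"
  shows "nu_idx n k (nu_idx n (- k) i) = i"
proof -
  have "int (nu_idx n (- k) i) - 1 = (int i - 1 - k) mod int n"
    using assms by (simp add: nu_idx_def)
  then have "(int (nu_idx n (- k) i) - 1 + k) mod int n = (int i - 1) mod int n"
    by (metis diff_add_cancel mod_add_left_eq)
  also have "\<dots> = int i - 1"
    using assms by simp
  finally show ?thesis
    using assms by (simp add: nu_idx_def)
qed

lemma diagram_row:
  assumes "1 \<le> r" and "r \<le> n"
  shows "{q. (n + 1 - r, q) \<in> diagram n lam} = {1..lam r}"
  using assms by (auto simp: diagram_def Suc_diff_le)

lemma partsX_outside: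
  assumes "lam \<in> partsX n m" and "\<not> (1 \<le> r \<and> r \<le> n)"
  shows "lam r = 0"
proof -
  have "\<forall>p. (p < 1 \<or> p > n) \<longrightarrow> lam p = 0"
    using assms(1) unfolding partsX_def mem_Collect_eq by (rule conjunct1)
  then have "(r < 1 \<or> r > n) \<longrightarrow> lam r = 0" ..
  moreover have "r < 1 \<or> r > n"
    using assms(2) by auto
  ultimately show ?thesis ..
qed

lemma partsX_antimono:
  assumes "lam \<in> partsX n m" and "1 \<le> p" and "p \<le> q" and "q \<le> n"
  shows "lam q \<le> lam p"
  using assms by (simp add: partsX_def)

lemma partsX_le:
  assumes "lam \<in> partsX n m"
  shows "lam p \<le> m"
  using assms by (simp add: partsX_def)

lemma diagram_inj_on_partsX: "inj_on (diagram n) (partsX n m)"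
proof (rule inj_onI)
  fix lam mu
  assume lam: "lam \<in> partsX n m" and mu: "mu \<in> partsX n m"
    and eq: "diagram n lam = diagram n mu"
  show "lam = mu"
  proof
    fix r
    show "lam r = mu r"
    proof (cases "1 \<le> r \<and> r \<le> n")
      case True
      then have "{1..lam r} = {1..mu r}"
        using eq diagram_row[of r n] by metis
      then show ?thesis
        by (metis card_atLeastAtMost diff_Suc_1)
    qed (simp add: partsX_outside[OF lam] partsX_outside[OF mu])
  qed
qed

lemma Xplus_tplus:
  assumes "lam \<in> Xplus n m \<alpha>"
  shows "tplus n m \<alpha> lam \<in> partsX n m"
    and "diagram n (tplus n m \<alpha> lam) = insert \<alpha> (diagram n lam)"
proof -
  have "\<exists>!mu. mu \<in> partsX n m \<and> diagram n mu = diagram n lam \<union> {\<alpha>}"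
    using assms diagram_inj_on_partsX by (auto simp: Xplus_def inj_on_def)
  from theI'[OF this] show "tplus n m \<alpha> lam \<in> partsX n m"
    and "diagram n (tplus n m \<alpha> lam) = insert \<alpha> (diagram n lam)"
    by (simp_all add: tplus_def)
qed

lemma Xminus_tminus:
  assumes "lam \<in> Xminus n m \<alpha>"
  shows "tminus n m \<alpha> lam \<in> partsX n m"
    and "diagram n (tminus n m \<alpha> lam) = diagram n lam - {\<alpha>}"
proof -
  have "\<exists>!mu. mu \<in> partsX n m \<and> diagram n mu = diagram n lam - {\<alpha>}"
    using assms diagram_inj_on_partsX by (auto simp: Xminus_def inj_on_def)
  from theI'[OF this] show "tminus n m \<alpha> lam \<in> partsX n m"
    and "diagram n (tminus n m \<alpha> lam) = diagram n lam - {\<alpha>}"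
    by (simp_all add: tminus_def)
qed

lemma tplus_eqI:
  assumes "mu \<in> partsX n m" and "lam \<in> Xplus n m \<alpha>"
    and "diagram n mu = insert \<alpha> (diagram n lam)"
  shows "tplus n m \<alpha> lam = mu"
  using assms Xplus_tplus[OF assms(2)] diagram_inj_on_partsX by (metis inj_onD)

lemma tminus_Xplus:
  assumes "lam \<in> Xminus n m \<alpha>"
  shows "tminus n m \<alpha> lam \<in> Xplus n m \<alpha>"
    and "tplus n m \<alpha> (tminus n m \<alpha> lam) = lam"
proof -
  have lam: "lam \<in> partsX n m" and box: "\<alpha> \<in> diagram n lam"
    using assms by (auto simp: Xminus_def)
  have diag: "diagram n lam = insert \<alpha> (diagram n (tminus n m \<alpha> lam))"
    using Xminus_tminus(2)[OF assms] box by auto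
  show X: "tminus n m \<alpha> lam \<in> Xplus n m \<alpha>"
    using Xminus_tminus[OF assms] lam diag unfolding Xplus_def by auto
  show "tplus n m \<alpha> (tminus n m \<alpha> lam) = lam"
    using tplus_eqI[OF lam X diag] .
qed

lemma atLeastAtMost_insert_new:
  fixes a b j :: nat
  assumes "{1..b} = insert j {1..a}" and "j \<notin> {1..a}"
  shows "j = Suc a" and "b = Suc a"
proof -
  show b: "b = Suc a"
    using arg_cong[OF assms(1), of card] assms(2) by simp
  show "j = Suc a"
    using assms(1,2) unfolding b by (metis atLeastAtMost_iff insertI1 le_SucE)
qed

lemma diagram_insert_box:
  assumes lam: "lam \<in> partsX n m" and mu: "mu \<in> partsX n m"
    and new: "(i, j) \<notin> diagram n lam"
    and diag: "diagram n mu = insert (i, j) (diagram n lam)"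
    and i: "1 \<le> i" "i \<le> n"
  shows "j = Suc (lam (n + 1 - i))" and "mu = lam(n + 1 - i := j)"
proof -
  let ?r = "n + 1 - i"
  have r: "1 \<le> ?r" "?r \<le> n" "n + 1 - ?r = i"
    using i by auto
  have row: "{1..mu r} = {q. (n + 1 - r, q) \<in> insert (i, j) (diagram n lam)}"
    if "1 \<le> r" "r \<le> n" for r
    unfolding diag[symmetric] by (rule diagram_row[OF that, symmetric])
  have other_rows: "{1..mu r} = {1..lam r}" if "1 \<le> r" "r \<le> n" "r \<noteq> ?r" for r
  proof -
    have "n + 1 - r \<noteq> i"
      using that i by auto
    then show ?thesis
      using row[OF that(1,2)] diagram_row[OF that(1,2), of lam] by simp
  qed
  have "{1..mu ?r} = insert j {1..lam ?r}"
    using row[OF r(1,2)] diagram_row[OF r(1,2), of lam] unfolding r(3) by auto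
  moreover have "j \<notin> {1..lam ?r}"
    using new diagram_row[OF r(1,2), of lam] unfolding r(3) by auto
  ultimately have j: "j = Suc (lam ?r)" and mu_r: "mu ?r = Suc (lam ?r)"
    by (rule atLeastAtMost_insert_new)+
  show "j = Suc (lam ?r)"
    by (rule j)
  show "mu = lam(?r := j)"
  proof
    fix s
    show "mu s = (lam(?r := j)) s"
    proof (cases "1 \<le> s \<and> s \<le> n \<and> s \<noteq> ?r")
      case True
      then have "mu s = lam s"
        using other_rows[of s] by (metis card_atLeastAtMost diff_Suc_1)
      then show ?thesis
        using True by simp
    next
      case False
      then show ?thesis
        using partsX_outside[OF lam, of s] partsX_outside[OF mu, of s] j mu_r by auto
    qed
  qed
qed

lemma conj_part_fun_upd_Suc:
  assumes "1 \<le> r" and "r \<le> n"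
  shows "conj_part n (lam(r := Suc (lam r))) q
           = conj_part n lam q + (if q = Suc (lam r) then 1 else 0)"
proof (cases "q = Suc (lam r)")
  case True
  then have "{p \<in> {1..n}. q \<le> (lam(r := Suc (lam r))) p} = insert r {p \<in> {1..n}. q \<le> lam p}"
    using assms by auto
  moreover have "r \<notin> {p \<in> {1..n}. q \<le> lam p}"
    using True by simp
  ultimately show ?thesis
    using True by (simp add: conj_part_def)
next
  case False
  then have "{p \<in> {1..n}. q \<le> (lam(r := Suc (lam r))) p} = {p \<in> {1..n}. q \<le> lam p}"
    by auto
  then show ?thesis
    using False by (simp add: conj_part_def)
qed

lemma conj_part_outer_corner:
  assumes lam: "lam \<in> partsX n m" and mu: "lam(r := Suc (lam r)) \<in> partsX n m"
    and r: "1 \<le> r" "r \<le> n"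
  shows "conj_part n lam (Suc (lam r)) = r - 1"
proof -
  have "{p \<in> {1..n}. Suc (lam r) \<le> lam p} = {1..r - 1}"
  proof (intro set_eqI iffI)
    fix p
    assume "p \<in> {p \<in> {1..n}. Suc (lam r) \<le> lam p}"
    then have p: "1 \<le> p" "p \<le> n" "lam r < lam p"
      by auto
    have "p < r"
    proof (rule ccontr)
      assume "\<not> p < r"
      then have "lam p \<le> lam r"
        using partsX_antimono[OF lam r(1) _ p(2)] by simp
      with p(3) show False
        by simp
    qed
    with p show "p \<in> {1..r - 1}"
      by simp
  next
    fix p
    assume "p \<in> {1..r - 1}"
    then have p: "1 \<le> p" "p \<le> r" "p \<noteq> r"
      by auto
    have "(lam(r := Suc (lam r))) r \<le> (lam(r := Suc (lam r))) p"
      by (rule partsX_antimono[OF mu p(1,2) r(2)])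
    with p r show "p \<in> {p \<in> {1..n}. Suc (lam r) \<le> lam p}"
      by simp
  qed
  then show ?thesis
    by (simp add: conj_part_def)
qed

lemma fst_xk:
  "fst (xk n m lam k) p
     = (if 1 \<le> p \<and> p \<le> n then fst (xvec n m lam) (nu_idx n k p) + k * int m else 0)"
  by (simp add: xk_def add_vec_def nu_vec_def mvec_def)

lemma snd_xk:
  "snd (xk n m lam k) q = (if 1 \<le> q \<and> q \<le> m then snd (xvec n m lam) q + k * int m else 0)"
  by (simp add: xk_def add_vec_def nu_vec_def mvec_def)

lemma xk_add_box:
  fixes k :: int
  assumes n: "0 < n" and i: "1 \<le> i" "i \<le> n"
    and lam: "lam \<in> partsX n m"
    and mu: "lam(n + 1 - i := Suc (lam (n + 1 - i))) \<in> partsX n m"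
  defines "r \<equiv> n + 1 - i"
  defines "\<beta> \<equiv> (nu_idx n (- k) i, Suc (lam r))"
  shows "xk n m lam k \<in> Piplus \<beta>"
    and "xk n m (lam(r := Suc (lam r))) k = tauplus n m \<beta> (xk n m lam k)"
proof -
  define b where "b = nu_idx n (- k) i"
  have r: "1 \<le> r" "r \<le> n" "n + 1 - r = i"
    using i by (auto simp: r_def)
  have b: "1 \<le> b" "b \<le> n" "nu_idx n k b = i"
    using nu_idx_bounds[OF n] nu_idx_inverse[OF n i] by (auto simp: b_def)
  have j: "Suc (lam r) \<le> m"
    using partsX_le[OF mu, of r] by (simp add: r_def)
  have conj_j: "conj_part n lam (Suc (lam r)) = n - i"
    using conj_part_outer_corner[OF lam mu[folded r_def] r(1,2)] by (simp add: r_def)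
  show "xk n m lam k \<in> Piplus \<beta>"
    using b r j i conj_j
    by (simp add: Piplus_def \<beta>_def b_def[symmetric] r_def fst_xk snd_xk xvec_def of_nat_diff
        algebra_simps)
  have other: "nu_idx n k p \<noteq> i" if "1 \<le> p" "p \<le> n" "p \<noteq> b" for p
    using that nu_idx_inverse[OF n that(1,2), of "- k"] by (auto simp: b_def)
  have "fst (xk n m (lam(r := Suc (lam r))) k) p
          = ((fst (xk n m lam k))(b := fst (xk n m lam k) b + int n)) p" for p
  proof (cases "1 \<le> p \<and> p \<le> n")
    case True
    have "n + 1 - nu_idx n k p \<noteq> r" if "p \<noteq> b"
      using other[OF _ _ that] True nu_idx_bounds[OF n, of k p] r by auto
    then show ?thesis
      using True b r by (auto simp: fst_xk xvec_def algebra_simps)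
  next
    case False
    then have "p \<noteq> b"
      using b by auto
    with False show ?thesis
      by (auto simp: fst_xk)
  qed
  moreover have "snd (xk n m (lam(r := Suc (lam r))) k) q
          = ((snd (xk n m lam k))(Suc (lam r) := snd (xk n m lam k) (Suc (lam r)) + int m)) q" for q
    using j by (auto simp: snd_xk xvec_def conj_part_fun_upd_Suc[OF r(1,2)] algebra_simps)
  ultimately show "xk n m (lam(r := Suc (lam r))) k = tauplus n m \<beta> (xk n m lam k)"
    by (simp add: tauplus_def \<beta>_def b_def[symmetric] prod_eq_iff fun_eq_iff)
qed

lemma xk_tplus:
  fixes k :: int
  assumes n: "0 < n" and i: "1 \<le> i" "i \<le> n" and X: "lam \<in> Xplus n m (i, j)"
  shows "xk n m lam k \<in> Piplus (nu_idx n (- k) i, j)"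
    and "xk n m (tplus n m (i, j) lam) k = tauplus n m (nu_idx n (- k) i, j) (xk n m lam k)"
proof -
  have lam: "lam \<in> partsX n m" and new: "(i, j) \<notin> diagram n lam"
    using X by (auto simp: Xplus_def)
  note mu = Xplus_tplus[OF X]
  note box = diagram_insert_box[OF lam mu(1) new mu(2) i]
  have t: "tplus n m (i, j) lam = lam(n + 1 - i := Suc (lam (n + 1 - i)))"
    using box by simp
  with mu(1) have "lam(n + 1 - i := Suc (lam (n + 1 - i))) \<in> partsX n m"
    by simp
  from xk_add_box[OF n i lam this, of k]
  show "xk n m lam k \<in> Piplus (nu_idx n (- k) i, j)"
    and "xk n m (tplus n m (i, j) lam) k = tauplus n m (nu_idx n (- k) i, j) (xk n m lam k)"
    unfolding t box(1)[symmetric] by simp_all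
qed

lemma tauplus_mem_Piminus: "x \<in> Piplus \<gamma> \<Longrightarrow> tauplus n m \<gamma> x \<in> Piminus n m \<gamma>"
  by (simp add: Piplus_def Piminus_def tauplus_def)

lemma tauminus_tauplus: "tauminus n m \<gamma> (tauplus n m \<gamma> x) = x"
  by (simp add: tauplus_def tauminus_def)

theorem lemma4p13:
  fixes n m i j :: nat and k :: int and lam :: "nat \<Rightarrow> nat"
  assumes "0 < n" and "n < m" and "coprime m n"
    and "1 \<le> i" and "i \<le> n" and "1 \<le> j" and "j \<le> m"
  defines "\<beta> \<equiv> (nu_idx n (- k) i, j)"
  shows "(lam \<in> Xplus n m (i, j) \<longrightarrow>
            xk n m lam k \<in> Piplus \<beta> \<and>
            xk n m (tplus n m (i, j) lam) k = tauplus n m \<beta> (xk n m lam k))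
       \<and> (lam \<in> Xminus n m (i, j) \<longrightarrow>
            xk n m lam k \<in> Piminus n m \<beta> \<and>
            xk n m (tminus n m (i, j) lam) k = tauminus n m \<beta> (xk n m lam k))"
proof (intro conjI impI)
  assume "lam \<in> Xplus n m (i, j)"
  then show "xk n m lam k \<in> Piplus \<beta>"
    and "xk n m (tplus n m (i, j) lam) k = tauplus n m \<beta> (xk n m lam k)"
    unfolding \<beta>_def using xk_tplus assms(1,4,5) by blast+
next
  assume X: "lam \<in> Xminus n m (i, j)"
  let ?mu = "tminus n m (i, j) lam"
  have on_hyperplane: "xk n m ?mu k \<in> Piplus \<beta>"
    and shift: "xk n m lam k = tauplus n m \<beta> (xk n m ?mu k)"
    using xk_tplus[OF assms(1,4,5) tminus_Xplus(1)[OF X], of k]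
    unfolding tminus_Xplus(2)[OF X] \<beta>_def by simp_all
  show "xk n m lam k \<in> Piminus n m \<beta>"
    unfolding shift by (rule tauplus_mem_Piminus[OF on_hyperplane])
  show "xk n m ?mu k = tauminus n m \<beta> (xk n m lam k)"
    unfolding shift by (rule tauminus_tauplus[symmetric])
qed

end
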